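(* Let $\mathcal{X}\subseteq\mathbb{R}^d$ and let $\mathcal{M}$ be a randomized mechanism on weighted data sets that admits a weighted distinguishability profile $\epsilon\colon[1,\infty)\times\mathcal{X}\to\mathbb{R}_{\ge 0}$. Let $q\colon\mathcal{X}\to(0,1]$ be a function and let $S_q$ be the Poisson importance sampler for $q$. Then the mechanism $\widehat{\mathcal{M}}=\mathcal{M}\circ S_q$ (acting on unweighted data sets) admits the distinguishability profile $$\psi(\mathbf{x})=\log\Big(1+q(\mathbf{x})\big(e^{\epsilon(w,\mathbf{x})}-1\big)\Big),\qquad\text{where } w=1/q(\mathbf{x}).$$
   Context: A data set is a finite subset $\mathcal{D}$ of $\mathcal{X}$. Two distributions $P,Q$ on a space $\mathcal{Y}$ are $\epsilon$-indistinguishable ($\epsilon\ge 0$) if $P(Y)\le e^{\epsilon}Q(Y)$ and $Q(Y)\le e^{\epsilon}P(Y)$ for all measurable $Y\subseteq\mathcal{Y}$. A function $\psi\colon\mathcal{X}\to\mathbb{R}_{\ge0}$ is a distinguishability profile of a mechanism $\mathcal{A}$ on data sets if for all data sets $\mathcal{D}\subseteq\mathcal{X}$ and all points $\mathbf{x}\in\mathcal{X}$, the distributions of $\mathcal{A}(\mathcal{D})$ and $\mathcal{A}(\mathcal{D}\cup\{\mathbf{x}\})$ are $\psi(\mathbf{x})$-indistinguishable. A weighted data set is a finite set $\mathcal{S}=\{(w_i,\mathbf{x}_i)\}_{i=1}^n$ with $w_i\ge1$, $\mathbf{x}_i\in\mathcal{X}$. A function $\epsilon\colon[1,\infty)\times\mathcal{X}\to\mathbb{R}_{\ge0}$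 is a weighted distinguishability profile of a mechanism $\mathcal{M}$ on weighted data sets if for all weighted data sets $\mathcal{S}$ and all $(w',\mathbf{x}')$, the distributions of $\mathcal{M}(\mathcal{S})$ and $\mathcal{M}(\mathcal{S}\cup\{(w',\mathbf{x}')\})$ are $\epsilon(w',\mathbf{x}')$-indistinguishable. The Poisson importance sampler for $q$ is the randomized map $S_q(\mathcal{D})=\{(w_i,\mathbf{x}_i)\mid \gamma_i=1\}$ for $\mathcal{D}=\{\mathbf{x}_1,\dots,\mathbf{x}_n\}$, where $w_i=1/q(\mathbf{x}_i)$ and $\gamma_1,\dots,\gamma_n$ are independent Bernoulli variables with parameters $q(\mathbf{x}_i)$. *)

theory Defs
  imports "HOL-Probability.Probability"
begin

definition data_set :: "'x set \<Rightarrow> 'x set \<Rightarrow> bool" where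
  "data_set X D \<longleftrightarrow> finite D \<and> D \<subseteq> X"

definition weighted_data_set :: "'x set \<Rightarrow> (real \<times> 'x) set \<Rightarrow> bool" where
  "weighted_data_set X S \<longleftrightarrow> finite S \<and> (\<forall>(w, x) \<in> S. w \<ge> 1 \<and> x \<in> X)"

definition indist :: "'b measure \<Rightarrow> real \<Rightarrow> 'b measure \<Rightarrow> 'b measure \<Rightarrow> bool" where
  "indist N eps P Q \<longleftrightarrow> eps \<ge> 0 \<and>
     (\<forall>Y \<in> sets N. measure P Y \<le> exp eps * measure Q Y \<and> measure Q Y \<le> exp eps * measure P Y)"

definition dist_profile ::
  "'x set \<Rightarrow> 'b measure \<Rightarrow> ('x set \<Rightarrow> 'b measure) \<Rightarrow> ('x \<Rightarrow> real) \<Rightarrow> bool" where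
  "dist_profile X N A psi \<longleftrightarrow>
     (\<forall>x \<in> X. psi x \<ge> 0) \<and>
     (\<forall>D x. data_set X D \<longrightarrow> x \<in> X \<longrightarrow> indist N (psi x) (A D) (A (insert x D)))"

definition weighted_dist_profile ::
  "'x set \<Rightarrow> 'b measure \<Rightarrow> ((real \<times> 'x) set \<Rightarrow> 'b measure) \<Rightarrow> (real \<Rightarrow> 'x \<Rightarrow> real) \<Rightarrow> bool" where
  "weighted_dist_profile X N M eps \<longleftrightarrow>
     (\<forall>w x. w \<ge> 1 \<longrightarrow> x \<in> X \<longrightarrow> eps w x \<ge> 0) \<and>
     (\<forall>S w' x'. weighted_data_set X S \<longrightarrow> w' \<ge> 1 \<longrightarrow> x' \<in> X \<longrightarrow>
        indist N (eps w' x') (M S) (M (insert (w', x') S)))"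

definition poisson_sampler :: "('x \<Rightarrow> real) \<Rightarrow> 'x set \<Rightarrow> (real \<times> 'x) set pmf" where
  "poisson_sampler q D =
     map_pmf (\<lambda>\<gamma>. {(1 / q x, x) | x. x \<in> D \<and> \<gamma> x})
             (Pi_pmf D False (\<lambda>x. bernoulli_pmf (q x)))"

text \<open>The composed mechanism M \<circ> S_q: the output distribution on N obtained by first sampling
  a weighted data set and then running M on it (i.e. the monadic bind, with output space N).\<close>
definition compose_sampler ::
  "'b measure \<Rightarrow> ((real \<times> 'x) set \<Rightarrow> 'b measure) \<Rightarrow> ('x \<Rightarrow> real) \<Rightarrow> 'x set \<Rightarrow> 'b measure" where
  "compose_sampler N M q D =
     measure_of (space N) (sets N)
       (\<lambda>A. \<integral>\<^sup>+ S. emeasure (M S) A \<partial>measure_pmf (poisson_sampler q D))"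

end

theory Submission
  imports Defs
begin

text \<open>Adding x to D only changes the sampled weighted data set with probability q x, and then
  by inserting (w, x) with w = 1 / q x. So the probability of an event Y under D \<union> {x} is the
  mixture q b + (1 - q) a of the averages a and b of Pr[M S \<in> Y] and Pr[M (S \<union> {(w, x)}) \<in> Y]
  over the sample S drawn from D. Integrating the weighted profile gives b \<le> e a and a \<le> e b with
  e = exp (eps w x), and an elementary inequality turns this into the factor 1 + q (e - 1) in both
  directions.\<close>

lemma set_pmf_poisson_sampler:
  "S \<in> set_pmf (poisson_sampler q D) \<Longrightarrow> S \<subseteq> (\<lambda>x. (1 / q x, x)) ` D"
  unfolding poisson_sampler_def by auto

lemma finite_set_pmf_poisson_sampler:
  assumes "finite D"
  shows "finite (set_pmf (poisson_sampler q D))"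
proof (rule finite_subset)
  show "set_pmf (poisson_sampler q D) \<subseteq> Pow ((\<lambda>x. (1 / q x, x)) ` D)"
    using set_pmf_poisson_sampler by blast
qed (use assms in simp)

lemma weighted_data_set_poisson_sampler:
  assumes "data_set X D" and "\<And>x. x \<in> X \<Longrightarrow> 0 < q x \<and> q x \<le> 1"
    and "S \<in> set_pmf (poisson_sampler q D)"
  shows "weighted_data_set X S"
proof -
  have "finite S"
    using assms(1) finite_subset[OF set_pmf_poisson_sampler[OF assms(3)]]
    by (simp add: data_set_def)
  moreover have "w \<ge> 1 \<and> y \<in> X" if "(w, y) \<in> S" for w y
    using that set_pmf_poisson_sampler[OF assms(3)] assms(1,2) by (force simp: data_set_def)
  ultimately show ?thesis
    by (auto simp: weighted_data_set_def)
qed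

lemma poisson_sampler_insert:
  assumes "finite D" and "x \<notin> D"
  shows "poisson_sampler q (insert x D) =
    map_pmf (\<lambda>(keep, S). if keep then insert (1 / q x, x) S else S)
      (pair_pmf (bernoulli_pmf (q x)) (poisson_sampler q D))"
  unfolding poisson_sampler_def using assms
  by (simp add: Pi_pmf_insert pair_map_pmf2 map_pmf_comp, intro map_pmf_cong refl)
    (auto split: if_splits)

lemma integral_poisson_sampler_insert:
  fixes f :: "(real \<times> 'x) set \<Rightarrow> real"
  assumes "finite D" and "x \<notin> D" and "0 \<le> q x" "q x \<le> 1" and "\<And>S. 0 \<le> f S"
  shows "(\<integral>S. f S \<partial>poisson_sampler q (insert x D)) =
    q x * (\<integral>S. f (insert (1 / q x, x) S) \<partial>poisson_sampler q D) +
    (1 - q x) * (\<integral>S. f S \<partial>poisson_sampler q D)"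
proof -
  let ?P = "poisson_sampler q D"
  let ?I\<^sub>1 = "\<integral>S. f (insert (1 / q x, x) S) \<partial>?P" and ?I\<^sub>0 = "\<integral>S. f S \<partial>?P"
  have integral_eq: "(\<integral>\<^sup>+S. ennreal (g S) \<partial>p) = ennreal (\<integral>S. g S \<partial>p)"
    if "finite (set_pmf p)" "\<And>S. 0 \<le> g S" for p and g :: "_ \<Rightarrow> real"
    using that by (intro nn_integral_eq_integral integrable_measure_pmf_finite AE_I2)
  have "ennreal (\<integral>S. f S \<partial>poisson_sampler q (insert x D)) =
      (\<integral>\<^sup>+S. ennreal (f S) \<partial>poisson_sampler q (insert x D))"
    using assms by (simp add: integral_eq finite_set_pmf_poisson_sampler)
  also have "\<dots> = ennreal (q x) * (\<integral>\<^sup>+S. ennreal (f (insert (1 / q x, x) S)) \<partial>?P) +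
      ennreal (1 - q x) * (\<integral>\<^sup>+S. ennreal (f S) \<partial>?P)"
    using assms by (simp add: poisson_sampler_insert nn_integral_pair_pmf' mult.commute)
  also have "\<dots> = ennreal (q x * ?I\<^sub>1) + ennreal ((1 - q x) * ?I\<^sub>0)"
    using assms by (simp add: integral_eq finite_set_pmf_poisson_sampler ennreal_mult)
  also have "\<dots> = ennreal (q x * ?I\<^sub>1 + (1 - q x) * ?I\<^sub>0)"
    using assms by (intro ennreal_plus[symmetric] mult_nonneg_nonneg integral_nonneg) auto
  finally show ?thesis
    using assms by (subst (asm) ennreal_inj) (auto intro: integral_nonneg)
qed

lemma emeasure_compose_sampler:
  assumes "\<And>S. S \<in> set_pmf (poisson_sampler q D) \<Longrightarrow> sets (M S) = sets N" and "Y \<in> sets N"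
  shows "emeasure (compose_sampler N M q D) Y = (\<integral>\<^sup>+S. emeasure (M S) Y \<partial>poisson_sampler q D)"
  unfolding compose_sampler_def
proof (rule emeasure_measure_of_sigma[OF sets.sigma_algebra_axioms _ _ assms(2)])
  show "positive (sets N) (\<lambda>A. \<integral>\<^sup>+S. emeasure (M S) A \<partial>poisson_sampler q D)"
    by (simp add: positive_def)
  show "countably_additive (sets N) (\<lambda>A. \<integral>\<^sup>+S. emeasure (M S) A \<partial>poisson_sampler q D)"
  proof (rule countably_additiveI)
    fix A :: "nat \<Rightarrow> _"
    assume A: "range A \<subseteq> sets N" "disjoint_family A"
    have "(\<Sum>i. \<integral>\<^sup>+S. emeasure (M S) (A i) \<partial>poisson_sampler q D) =
        (\<integral>\<^sup>+S. (\<Sum>i. emeasure (M S) (A i)) \<partial>poisson_sampler q D)"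
      by (simp add: nn_integral_suminf)
    also have "\<dots> = (\<integral>\<^sup>+S. emeasure (M S) (\<Union>i. A i) \<partial>poisson_sampler q D)"
      using A assms(1) by (intro nn_integral_cong_AE AE_pmfI suminf_emeasure) auto
    finally show "(\<Sum>i. \<integral>\<^sup>+S. emeasure (M S) (A i) \<partial>poisson_sampler q D) =
        (\<integral>\<^sup>+S. emeasure (M S) (\<Union>i. A i) \<partial>poisson_sampler q D)" .
  qed
qed

lemma measure_compose_sampler:
  assumes "finite D"
    and "\<And>S. S \<in> set_pmf (poisson_sampler q D) \<Longrightarrow> finite_measure (M S) \<and> sets (M S) = sets N"
    and "Y \<in> sets N"
  shows "measure (compose_sampler N M q D) Y = (\<integral>S. measure (M S) Y \<partial>poisson_sampler q D)"
proof -
  have "emeasure (compose_sampler N M q D) Y = (\<integral>\<^sup>+S. emeasure (M S) Y \<partial>poisson_sampler q D)"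
    using assms by (intro emeasure_compose_sampler) auto
  also have "\<dots> = (\<integral>\<^sup>+S. ennreal (measure (M S) Y) \<partial>poisson_sampler q D)"
    using assms(2) by (intro nn_integral_cong_AE AE_pmfI) (simp add: finite_measure.emeasure_eq_measure)
  also have "\<dots> = ennreal (\<integral>S. measure (M S) Y \<partial>poisson_sampler q D)"
    using assms(1) by (intro nn_integral_eq_integral integrable_measure_pmf_finite
        finite_set_pmf_poisson_sampler) auto
  finally show ?thesis
    by (simp add: measure_def integral_nonneg)
qed

lemma mixture_amplification_bounds:
  fixes a b q e :: real
  assumes "0 \<le> a" and "0 \<le> q" "q \<le> 1" and "0 < e" and "b \<le> e * a" "a \<le> e * b"
  shows "q * b + (1 - q) * a \<le> (1 + q * (e - 1)) * a"
    and "a \<le> (1 + q * (e - 1)) * (q * b + (1 - q) * a)"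
proof -
  let ?c = "1 + q * (e - 1)"
  have "?c * a - (q * b + (1 - q) * a) = q * (e * a - b)"
    by (simp add: algebra_simps)
  moreover have "0 \<le> q * (e * a - b)"
    using assms by simp
  ultimately show "q * b + (1 - q) * a \<le> ?c * a"
    by linarith
  have "e * (?c * (q * b + (1 - q) * a) - a) = ?c * q * (e * b - a) + a * q * (1 - q) * (e - 1)\<^sup>2"
    by (simp add: algebra_simps power2_eq_square)
  moreover have "0 \<le> ?c"
  proof -
    have "?c = (1 - q) + q * e"
      by (simp add: algebra_simps)
    moreover have "0 \<le> q * e"
      using assms by simp
    ultimately show ?thesis
      using assms(3) by linarith
  qed
  then have "0 \<le> ?c * q * (e * b - a)"
    using assms by simp
  moreover have "0 \<le> a * q * (1 - q) * (e - 1)\<^sup>2"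
    using assms by simp
  ultimately show "a \<le> ?c * (q * b + (1 - q) * a)"
    using assms(4) by (smt (verit) zero_le_mult_iff)
qed

lemma compose_sampler_insert_bounds:
  assumes mech: "\<And>S. weighted_data_set X S \<Longrightarrow> prob_space (M S) \<and> sets (M S) = sets N"
    and profile: "weighted_dist_profile X N M eps"
    and q_range: "\<And>x. x \<in> X \<Longrightarrow> 0 < q x \<and> q x \<le> 1"
    and D: "data_set X D" and x: "x \<in> X" "x \<notin> D" and Y: "Y \<in> sets N"
  defines "c \<equiv> 1 + q x * (exp (eps (1 / q x) x) - 1)"
  shows "measure (compose_sampler N M q D) Y \<le> c * measure (compose_sampler N M q (insert x D)) Y"
    and "measure (compose_sampler N M q (insert x D)) Y \<le> c * measure (compose_sampler N M q D) Y"
proof -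
  let ?P = "poisson_sampler q D" and ?w = "1 / q x"
  let ?e = "exp (eps ?w x)"
  define a where "a = (\<integral>S. measure (M S) Y \<partial>?P)"
  define b where "b = (\<integral>S. measure (M (insert (?w, x) S)) Y \<partial>?P)"
  have finD: "finite D" and D': "data_set X (insert x D)"
    using D x by (auto simp: data_set_def)
  have qx: "0 < q x" "q x \<le> 1" and w: "1 \<le> ?w"
    using q_range[OF x(1)] by auto
  have weighted: "weighted_data_set X S" "weighted_data_set X (insert (?w, x) S)"
    if "S \<in> set_pmf ?P" for S
    using weighted_data_set_poisson_sampler[OF D q_range that] w x(1)
    by (auto simp: weighted_data_set_def)
  have "indist N (eps ?w x) (M S) (M (insert (?w, x) S))" if "S \<in> set_pmf ?P" for S
    using profile weighted(1)[OF that] w x(1) unfolding weighted_dist_profile_def by blast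
  then have pointwise: "measure (M S) Y \<le> ?e * measure (M (insert (?w, x) S)) Y"
      "measure (M (insert (?w, x) S)) Y \<le> ?e * measure (M S) Y" if "S \<in> set_pmf ?P" for S
    using that Y unfolding indist_def by blast+
  have integral_le: "(\<integral>S. f S \<partial>?P) \<le> ?e * (\<integral>S. g S \<partial>?P)"
    if "\<And>S. S \<in> set_pmf ?P \<Longrightarrow> f S \<le> ?e * g S" for f g :: "_ \<Rightarrow> real"
  proof -
    have "(\<integral>S. f S \<partial>?P) \<le> (\<integral>S. ?e * g S \<partial>?P)"
      using that finD
      by (intro integral_mono_AE AE_pmfI integrable_measure_pmf_finite finite_set_pmf_poisson_sampler)
    then show ?thesis
      by simp
  qed
  have "a \<le> ?e * b" and "b \<le> ?e * a"
    unfolding a_def b_def using pointwise by (auto intro: integral_le)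
  moreover have "0 \<le> a"
    unfolding a_def by (simp add: integral_nonneg)
  moreover have "measure (compose_sampler N M q D) Y = a"
    unfolding a_def using mech weighted_data_set_poisson_sampler[OF D q_range] Y finD
    by (intro measure_compose_sampler) (auto intro: prob_space.finite_measure)
  moreover have "measure (compose_sampler N M q (insert x D)) Y = q x * b + (1 - q x) * a"
  proof -
    have "measure (compose_sampler N M q (insert x D)) Y =
        (\<integral>S. measure (M S) Y \<partial>poisson_sampler q (insert x D))"
      using mech weighted_data_set_poisson_sampler[OF D' q_range] Y finD
      by (intro measure_compose_sampler) (auto intro: prob_space.finite_measure)
    then show ?thesis
      unfolding a_def b_def using finD x(2) qx by (simp add: integral_poisson_sampler_insert)
  qed
  ultimately show "measure (compose_sampler N M q D) Y \<le> c * measure (compose_sampler N M q (insert x D)) Y"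
    and "measure (compose_sampler N M q (insert x D)) Y \<le> c * measure (compose_sampler N M q D) Y"
    using mixture_amplification_bounds[of a "q x" ?e b] qx unfolding c_def by auto
qed

theorem theorem2:
  fixes X :: "(real ^ 'd) set"
    and N :: "'b measure"
    and M :: "(real \<times> (real ^ 'd)) set \<Rightarrow> 'b measure"
    and eps :: "real \<Rightarrow> real ^ 'd \<Rightarrow> real"
    and q :: "real ^ 'd \<Rightarrow> real"
  assumes mech: "\<And>S. weighted_data_set X S \<Longrightarrow> prob_space (M S) \<and> sets (M S) = sets N"
    and profile: "weighted_dist_profile X N M eps"
    and q_range: "\<And>x. x \<in> X \<Longrightarrow> 0 < q x \<and> q x \<le> 1"
  shows "dist_profile X N (compose_sampler N M q)
           (\<lambda>x. ln (1 + q x * (exp (eps (1 / q x) x) - 1)))"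
proof -
  have c_ge_1: "1 \<le> 1 + q x * (exp (eps (1 / q x) x) - 1)" if "x \<in> X" for x
    using profile q_range[OF that] that unfolding weighted_dist_profile_def by simp
  have "indist N (ln (1 + q x * (exp (eps (1 / q x) x) - 1)))
      (compose_sampler N M q D) (compose_sampler N M q (insert x D))"
    if D: "data_set X D" and x: "x \<in> X" for D x
  proof (cases "x \<in> D")
    case True
    then show ?thesis
      using c_ge_1[OF x] mult_right_mono[OF c_ge_1[OF x] measure_nonneg]
      by (auto simp: indist_def insert_absorb)
  next
    case False
    then show ?thesis
      using compose_sampler_insert_bounds[where q = q, OF mech profile q_range D x False] c_ge_1[OF x]
      by (simp add: indist_def)
  qed
  then show ?thesis
    using c_ge_1 by (simp add: dist_profile_def)
qed

end
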